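(* Let $p$ be a prime, $s\geq 2$, and let $t_1\geq1,t_2,\dots,t_s$ be nonnegative integers with $t_s\geq 1$; put $N=t_1+\cdots+t_s$. Let $\mathbf{w}_i^{(s)}$ be the $i$th row of $A^{t_1,\dots,t_s}$ (over $\mathbb{Z}_{p^s}$) and $\mathbf{w}_i^{(s+1)}$ the $i$th row of $A^{1,t_1-1,t_2,\dots,t_{s-1},t_s-1}$ (over $\mathbb{Z}_{p^{s+1}}$). Then: (i) $\tilde{\tau}_{s+1}(p^{q}\mathbf{w}_i^{(s+1)})=p^{q}\mathbf{w}_i^{(s)}$ for all $i\in\{2,\dots,N-1\}$ and $q\in\{0,\dots,\sigma_i-1\}$, where $\operatorname{ord}(\mathbf{w}_i^{(s)})=p^{\sigma_i}$; (ii) $\tilde{\tau}_{s+1}(p^{j+1}\mathbf{w}_1^{(s+1)})=p^{j}\mathbf{w}_1^{(s)}$ for all $j\in\{0,\dots,s-1\}$; (iii) $\tilde{\tau}_{s+1}(\mathbf{w}_1^{(s+1)})=\mathbf{w}_N^{(s)}$.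
   Context: For $r\geq1$ and $u\in\mathbb{Z}_{p^r}$ with $p$-ary expansion $u=\sum_{i=0}^{r-1}u_ip^i$, $\phi_r(u)=(u_{r-1},\dots,u_{r-1})+(u_0,\dots,u_{r-2})Y_{r-1}\in\mathbb{Z}_p^{p^{r-1}}$, where $Y_1=(0\ 1\ \cdots\ p-1)$ and $Y_k$ has first $k-1$ rows $(Y_{k-1}\ \cdots\ Y_{k-1})$ ($p$ copies) and last row $(0,\dots,0,1,\dots,1,\dots,p-1,\dots,p-1)$ (blocks of length $p^{k-1}$); $\phi_1=\mathrm{id}$; $\Phi_r$ applies $\phi_r$ coordinatewise and concatenates (it is injective). For $r\geq 2$, $\gamma_r$ is the permutation of $\mathbb{Z}_p^{p^{r-1}}$ given by $\gamma_r(\mathbf{x})_{j+ip+1}=\mathbf{x}_{jp^{r-2}+i+1}$ for $j\in\{0,\dots,p-1\}$, $i\in\{0,\dots,p^{r-2}-1\}$. Define $\tau_r:\mathbb{Z}_{p^r}\to\mathbb{Z}_{p^{r-1}}^p$ by $\tau_r(u)=\Phi_{r-1}^{-1}(\gamma_r^{-1}(\phi_r(u)))$. For $\mathbf{u}=(u_1,\dots,u_n)\in\mathbb{Z}_{p^r}^n$ with $\tau_r(u_i)=(u_{i,1},\dots,u_{i,p})$, set $\tilde{\tau}_r(\mathbf{u})=(u_{1,1},u_{2,1},\dots,u_{n,1},u_{1,2},\dots,u_{n,2},\dots,u_{1,p},\dots,u_{n,p})\in\mathbb{Z}_{p^{r-1}}^{pn}$. For $\mathbb{Z}_{p^r}$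 and $1\le i\le r$ let $T_i=\{jp^{i-1}:0\le j\le p^{r-i+1}-1\}$. The matrix $A^{a_1,\dots,a_r}$ over $\mathbb{Z}_{p^r}$ ($a_1\geq1$) is built recursively: start with $(1)$; appending a row of type $i$ to $A$ replaces $A$ by the matrix with top part $(A\ \cdots\ A)$ ($p^{r-i+1}$ copies) and new last row consisting of constant blocks $0\cdot p^{i-1},1\cdot p^{i-1},\dots,(p^{r-i+1}-1)p^{i-1}$, each block of the length of a row of $A$; one appends $a_1-1$ rows of type 1, then $a_2$ of type 2, ..., then $a_r$ of type $r$. The order $\operatorname{ord}(\mathbf{u})$ of a vector is the least $m\geq1$ with $m\mathbf{u}=\mathbf{0}$. *)

theory Defs
  imports "HOL-Computational_Algebra.Primes"
begin

text \<open>Conventions: elements of Z_(p^r) are natural numbers in [0, p^r); vectors are lists;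
  matrices are lists of rows. All indices in this file are 0-based.\<close>

definition digit :: "nat \<Rightarrow> nat \<Rightarrow> nat \<Rightarrow> nat" where
  "digit p u i = u div p ^ i mod p"

text \<open>The matrix Y_k (k rows, p^k columns): entry in row i, column c (0-based).
  Y_1 = (0 1 ... p-1); Y_(k+1) has first k rows (Y_k ... Y_k) (p copies) and last row
  consisting of the blocks 0..0, 1..1, ..., (p-1)..(p-1) of length p^k.\<close>
fun Ymat :: "nat \<Rightarrow> nat \<Rightarrow> nat \<Rightarrow> nat \<Rightarrow> nat" where
  "Ymat p 0 i c = 0"
| "Ymat p (Suc k) i c =
     (if k = 0 then c
      else if i < k then Ymat p k i (c mod p ^ k) else c div p ^ k)"

definition phi :: "nat \<Rightarrow> nat \<Rightarrow> nat \<Rightarrow> nat list" where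
  "phi p r u = (if r = 1 then [u] else
     map (\<lambda>c. (digit p u (r - 1) + (\<Sum>i<r - 1. digit p u i * Ymat p (r - 1) i c)) mod p)
         [0..<p ^ (r - 1)])"

definition Phi :: "nat \<Rightarrow> nat \<Rightarrow> nat list \<Rightarrow> nat list" where
  "Phi p r us = concat (map (phi p r) us)"

definition gamma :: "nat \<Rightarrow> nat \<Rightarrow> nat list \<Rightarrow> nat list" where
  "gamma p r x = map (\<lambda>k. x ! ((k mod p) * p ^ (r - 2) + k div p)) [0..<p ^ (r - 1)]"

text \<open>tau_r(u) = Phi_(r-1)^(-1)(gamma_r^(-1)(phi_r(u))) in Z_(p^(r-1))^p.\<close>
definition tau :: "nat \<Rightarrow> nat \<Rightarrow> nat \<Rightarrow> nat list" where
  "tau p r u = (THE v. length v = p \<and> (\<forall>x\<in>set v. x < p ^ (r - 1))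
                  \<and> gamma p r (Phi p (r - 1) v) = phi p r u)"

definition tau_tilde :: "nat \<Rightarrow> nat \<Rightarrow> nat list \<Rightarrow> nat list" where
  "tau_tilde p r us = concat (map (\<lambda>k. map (\<lambda>u. tau p r u ! k) us) [0..<p])"

definition vsmult :: "nat \<Rightarrow> nat \<Rightarrow> nat list \<Rightarrow> nat list" where
  "vsmult M a w = map (\<lambda>x. (a * x) mod M) w"

definition vec_ord :: "nat \<Rightarrow> nat list \<Rightarrow> nat" where
  "vec_ord M w = (LEAST m. m \<ge> 1 \<and> (\<forall>x\<in>set w. (m * x) mod M = 0))"

definition append_row :: "nat \<Rightarrow> nat \<Rightarrow> nat \<Rightarrow> nat list list \<Rightarrow> nat list list" where
  "append_row p r i A =
     map (\<lambda>row. concat (replicate (p ^ (r - i + 1)) row)) A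
     @ [concat (map (\<lambda>j. replicate (length (hd A)) (j * p ^ (i - 1))) [0..<p ^ (r - i + 1)])]"

definition row_types :: "nat list \<Rightarrow> nat list" where
  "row_types a = replicate (a ! 0 - 1) 1
     @ concat (map (\<lambda>i. replicate (a ! (i - 1)) i) [2..<length a + 1])"

definition Amat :: "nat \<Rightarrow> nat \<Rightarrow> nat list \<Rightarrow> nat list list" where
  "Amat p r a = fold (append_row p r) (row_types a) [[1]]"

end

theory Submission
  imports Defs "HOL-Number_Theory.Cong"
begin

(*
  With u written in base p, phi_r(u) is affine in the digits of u, and unwinding the permutation
  gamma shows that the m-th component of tau_(n+1)(u) is (u div p + m (u mod p) p^(n-1)) mod p^n;
  tau is well defined because phi_r is injective on Z_(p^r). In particular tau_(n+1)(p x) consists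
  of p copies of x mod p^n, and tau_(n+1)(1) = (0, p^(n-1), ..., (p-1) p^(n-1)).

  On the matrix side, raising every row type by one and passing from Z_(p^s) to Z_(p^(s+1)) keeps
  all block lengths and multiplies each new row by p. Hence, for A = A^(t_1,...,t_(s-1),t_s - 1),
  the matrix V is A with every row except the first multiplied by p, whereas W is A with each row
  repeated p times, followed by one row of type s, which is exactly tau_tilde of the all-ones first
  row.
*)

lemma digit_0: "digit p u 0 = u mod p"
  unfolding digit_def by simp

lemma digit_div: "digit p (u div p) i = digit p u (Suc i)"
  unfolding digit_def by (simp add: div_mult2_eq)

lemma digit_less: "p > 0 \<Longrightarrow> digit p u i < p"
  unfolding digit_def by simp

lemma digit_mod_power:
  assumes "i < n" "p > 0"
  shows "digit p (x mod p ^ n) i = digit p x i"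
proof -
  have pn: "p ^ n = p ^ i * p ^ (n - i)"
    using assms by (simp flip: power_add)
  have "x mod p ^ n div p ^ i = x div p ^ i mod p ^ (n - i)"
    using assms unfolding pn by (simp add: mod_mult2_eq mult.commute)
  moreover have "p dvd p ^ (n - i)"
    using assms by simp
  ultimately show ?thesis
    unfolding digit_def by (simp add: mod_mod_cancel)
qed

lemma digit_add_mult_power_below:
  assumes "i < j" "p > 0"
  shows "digit p (a + b * p ^ j) i = digit p a i"
proof -
  obtain d where j: "j = Suc (i + d)"
    using assms(1) less_imp_Suc_add by blast
  have "(a + b * p ^ j) div p ^ i = (a + (b * p ^ d * p) * p ^ i) div p ^ i"
    unfolding j by (simp add: power_add ac_simps)
  also have "\<dots> = a div p ^ i + b * p ^ d * p"
    using assms(2) by simp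
  finally show ?thesis
    unfolding digit_def by simp
qed

lemma digit_add_mult_power:
  "digit p (a + b * p ^ j) j = (digit p a j + b) mod p" if "p > 0"
  using that unfolding digit_def by (simp add: mod_simps add.commute)

lemma digit_power:
  assumes "p \<ge> 2"
  shows "digit p (p ^ i) j = (if j = i then 1 else 0)"
proof (cases "j \<le> i")
  case True
  then have "p ^ i div p ^ j = p ^ (i - j)"
    using assms by (simp add: power_diff)
  then show ?thesis
    using assms True unfolding digit_def by (cases "i - j") auto
next
  case False
  then have "p ^ i < p ^ j"
    using assms by (simp add: power_strict_increasing)
  then show ?thesis
    using False unfolding digit_def by simp
qed

lemma digit_eqI:
  assumes "\<And>i. i < n \<Longrightarrow> digit p x i = digit p y i" "x < p ^ n" "y < p ^ n"
  shows "x = y"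
  using assms
proof (induction n arbitrary: x y)
  case 0
  then show ?case by simp
next
  case (Suc n)
  have "x div p = y div p"
  proof (rule Suc.IH)
    show "digit p (x div p) i = digit p (y div p) i" if "i < n" for i
      using Suc.prems(1)[of "Suc i"] that by (simp add: digit_div)
    show "x div p < p ^ n" "y div p < p ^ n"
      using Suc.prems(2,3) by (simp_all add: less_mult_imp_div_less mult.commute)
  qed
  moreover have "x mod p = y mod p"
    using Suc.prems(1)[of 0] by (simp add: digit_0)
  ultimately show ?case
    by (metis div_mult_mod_eq)
qed

lemma Ymat_eq_digit:
  assumes "i < k" "c < p ^ k" "p > 0"
  shows "Ymat p k i c = digit p c i"
  using assms
proof (induction k arbitrary: i c)
  case 0
  then show ?case by simp
next
  case (Suc k)
  consider "k = 0" | "k > 0" "i < k" | "k > 0" "i = k"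
    using Suc.prems(1) by linarith
  then show ?case
  proof cases
    case 1
    then show ?thesis
      using Suc.prems by (simp add: digit_def)
  next
    case 2
    then have "Ymat p (Suc k) i c = digit p (c mod p ^ k) i"
      using Suc.IH Suc.prems(3) by simp
    then show ?thesis
      using 2 Suc.prems(3) by (simp add: digit_mod_power)
  next
    case 3
    have "c div p ^ k < p"
      using Suc.prems(2) by (simp add: less_mult_imp_div_less mult.commute)
    then show ?thesis
      using 3 unfolding digit_def by simp
  qed
qed

lemma length_phi: "r \<ge> 1 \<Longrightarrow> length (phi p r u) = p ^ (r - 1)"
  unfolding phi_def by simp

lemma nth_phi:
  assumes "r \<ge> 2" "c < p ^ (r - 1)" "p > 0"
  shows "phi p r u ! c = (digit p u (r - 1) + (\<Sum>i<r - 1. digit p u i * digit p c i)) mod p"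
  using assms by (simp add: phi_def Ymat_eq_digit)

lemma inj_on_phi:
  assumes "r \<ge> 2" "p \<ge> 2"
  shows "inj_on (phi p r) {..<p ^ r}"
proof
  fix x y
  assume x: "x \<in> {..<p ^ r}" and y: "y \<in> {..<p ^ r}" and eq: "phi p r x = phi p r y"
  have p0: "p > 0"
    using assms(2) by simp
  have entry: "phi p r u ! (p ^ i) = (digit p u (r - 1) + digit p u i) mod p"
    if "i < r - 1" for u i
  proof -
    have "p ^ i < p ^ (r - 1)"
      using that assms(2) by (simp add: power_strict_increasing)
    then have "phi p r u ! (p ^ i)
        = (digit p u (r - 1) + (\<Sum>j<r - 1. digit p u j * digit p (p ^ i) j)) mod p"
      by (rule nth_phi[OF assms(1) _ p0])
    also have "\<dots> = (digit p u (r - 1) + digit p u i) mod p"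
      using that assms(2) by (simp add: digit_power if_distrib cong: if_cong)
    finally show ?thesis .
  qed
  have top: "digit p x (r - 1) = digit p y (r - 1)"
    using arg_cong[OF eq, of "\<lambda>v. v ! 0"] nth_phi[OF assms(1) _ p0, of 0] p0
    by (simp add: digit_def)
  have low: "digit p x i = digit p y i" if "i < r - 1" for i
  proof -
    have "[digit p x (r - 1) + digit p x i = digit p x (r - 1) + digit p y i] (mod p)"
      using arg_cong[OF eq, of "\<lambda>v. v ! (p ^ i)"] entry[OF that] top by (simp add: cong_def)
    then show ?thesis
      using p0 by (simp add: cong_add_lcancel_nat cong_less_modulus_unique_nat digit_less)
  qed
  show "x = y"
  proof (rule digit_eqI)
    show "digit p x i = digit p y i" if "i < r" for i
      using that top low by (cases "i = r - 1") auto
  qed (use x y in auto)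
qed

lemma add_mult_less_power:
  fixes m p c :: nat
  assumes "n \<ge> 1" "m < p" "c < p ^ (n - 1)"
  shows "m + p * c < p ^ n"
proof -
  have "m + p * c < p * Suc c"
    using assms(2) by simp
  also have "\<dots> \<le> p * p ^ (n - 1)"
    using assms(3) by (intro mult_le_mono2) simp
  also have "\<dots> = p ^ n"
    using assms(1) by (cases n) simp_all
  finally show ?thesis .
qed

lemma div_less_power_pred:
  fixes k p :: nat
  assumes "n \<ge> 1" "k < p ^ n"
  shows "k div p < p ^ (n - 1)"
proof -
  obtain n' where "n = Suc n'"
    using assms(1) by (cases n) auto
  then show ?thesis
    using assms(2) less_mult_imp_div_less[of k "p ^ n'" p] by (simp add: mult.commute)
qed

lemma nth_concat_same_length:
  assumes "\<forall>ys\<in>set xss. length ys = L" "m < length xss" "c < L"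
  shows "concat xss ! (m * L + c) = xss ! m ! c"
  using assms
proof (induction xss arbitrary: m)
  case Nil
  then show ?case by simp
next
  case (Cons ys xss)
  then show ?case
    by (cases m) (auto simp: nth_append)
qed

lemma nth_gamma_Phi:
  assumes "n \<ge> 2" "p > 0" "length v = p" "k < p ^ n"
  shows "gamma p (Suc n) (Phi p n v) ! k = phi p n (v ! (k mod p)) ! (k div p)"
proof -
  have "k div p < p ^ (n - 1)"
    by (rule div_less_power_pred) (use assms(1,4) in simp_all)
  then have "concat (map (phi p n) v) ! (k mod p * p ^ (n - 1) + k div p)
      = phi p n (v ! (k mod p)) ! (k div p)"
    using assms by (simp add: nth_concat_same_length length_phi)
  then show ?thesis
    using assms(4) by (simp add: gamma_def Phi_def)
qed

lemma inj_on_gamma_Phi: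
  assumes "n \<ge> 2" "p \<ge> 2"
  shows "inj_on (\<lambda>v. gamma p (Suc n) (Phi p n v)) {v. length v = p \<and> (\<forall>x\<in>set v. x < p ^ n)}"
proof
  fix v w
  assume v: "v \<in> {v. length v = p \<and> (\<forall>x\<in>set v. x < p ^ n)}"
    and w: "w \<in> {v. length v = p \<and> (\<forall>x\<in>set v. x < p ^ n)}"
    and eq: "gamma p (Suc n) (Phi p n v) = gamma p (Suc n) (Phi p n w)"
  have p0: "p > 0"
    using assms(2) by simp
  show "v = w"
  proof (rule nth_equalityI)
    show "length v = length w"
      using v w by simp
    fix m
    assume m: "m < length v"
    have "phi p n (v ! m) = phi p n (w ! m)"
    proof (rule nth_equalityI)
      show "length (phi p n (v ! m)) = length (phi p n (w ! m))"
        using assms(1) by (simp add: length_phi)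
      fix c
      assume "c < length (phi p n (v ! m))"
      then have c: "c < p ^ (n - 1)"
        using assms(1) by (simp add: length_phi)
      have k: "m + p * c < p ^ n"
        using add_mult_less_power[of n m p c] assms(1) m v c by simp
      have "(m + p * c) mod p = m" "(m + p * c) div p = c"
        using m v by simp_all
      then show "phi p n (v ! m) ! c = phi p n (w ! m) ! c"
        using arg_cong[OF eq, of "\<lambda>x. x ! (m + p * c)"] v w
          nth_gamma_Phi[OF assms(1) p0 _ k, of v] nth_gamma_Phi[OF assms(1) p0 _ k, of w]
        by simp
    qed
    then show "v ! m = w ! m"
      using inj_on_phi[OF assms(1,2)] v w m by (auto simp: inj_on_def)
  qed
qed

lemma tau_eqI:
  assumes "n \<ge> 2" "p \<ge> 2" "length v = p" "\<forall>x\<in>set v. x < p ^ n"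
    and "gamma p (Suc n) (Phi p n v) = phi p (Suc n) u"
  shows "tau p (Suc n) u = v"
  unfolding tau_def
proof (rule the_equality)
  fix w
  assume "length w = p \<and> (\<forall>x\<in>set w. x < p ^ (Suc n - 1))
    \<and> gamma p (Suc n) (Phi p (Suc n - 1) w) = phi p (Suc n) u"
  then show "w = v"
    using inj_on_gamma_Phi[OF assms(1,2)] assms(3-5) by (auto simp: inj_on_def)
qed (use assms in simp)

lemma digit_tau_entry:
  fixes u b :: nat
  assumes "n \<ge> 1" "p > 0"
  defines "y \<equiv> (u div p + b * p ^ (n - 1)) mod p ^ n"
  shows "i < n - 1 \<Longrightarrow> digit p y i = digit p u (Suc i)"
    and "digit p y (n - 1) = (digit p u n + b) mod p"
proof -
  show "digit p y i = digit p u (Suc i)" if "i < n - 1"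
    using that assms by (simp add: digit_mod_power digit_add_mult_power_below digit_div)
  show "digit p y (n - 1) = (digit p u n + b) mod p"
    using assms by (simp add: digit_mod_power digit_add_mult_power digit_div)
qed

lemma nth_phi_tau_entry:
  assumes "n \<ge> 2" "p > 0" "m < p" "c < p ^ (n - 1)"
  shows "phi p n ((u div p + m * (u mod p) * p ^ (n - 1)) mod p ^ n) ! c
    = phi p (Suc n) u ! (m + p * c)"
proof -
  let ?y = "(u div p + m * (u mod p) * p ^ (n - 1)) mod p ^ n"
  let ?S = "\<Sum>i<n - 1. digit p u (Suc i) * digit p c i"
  have k: "m + p * c < p ^ n"
    using add_mult_less_power[OF _ assms(3,4)] assms(1) by simp
  have "phi p n ?y ! c = (digit p ?y (n - 1) + (\<Sum>i<n - 1. digit p ?y i * digit p c i)) mod p"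
    by (rule nth_phi[OF assms(1,4,2)])
  also have "\<dots> = ((digit p u n + m * (u mod p)) mod p + ?S) mod p"
  proof -
    have "digit p ?y (n - 1) = (digit p u n + m * (u mod p)) mod p"
      using assms(1,2) by (intro digit_tau_entry(2)) simp_all
    moreover have "(\<Sum>i<n - 1. digit p ?y i * digit p c i) = ?S"
    proof (rule sum.cong)
      fix i
      assume "i \<in> {..<n - 1}"
      then have "digit p ?y i = digit p u (Suc i)"
        using assms(1,2) by (intro digit_tau_entry(1)) simp_all
      then show "digit p ?y i * digit p c i = digit p u (Suc i) * digit p c i"
        by simp
    qed simp
    ultimately show ?thesis
      by simp
  qed
  also have "\<dots> = (digit p u n + (u mod p * m + ?S)) mod p"
    by (simp add: mod_simps ac_simps)
  also have "u mod p * m + ?S = (\<Sum>i<n. digit p u i * digit p (m + p * c) i)"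
  proof -
    have "(\<Sum>i<n. digit p u i * digit p (m + p * c) i)
        = (\<Sum>i<Suc (n - 1). digit p u i * digit p (m + p * c) i)"
      using assms(1) by simp
    also have "\<dots> = digit p u 0 * digit p (m + p * c) 0
        + (\<Sum>i<n - 1. digit p u (Suc i) * digit p (m + p * c) (Suc i))"
      by (rule sum.lessThan_Suc_shift)
    also have "\<dots> = u mod p * m + ?S"
      using assms(2,3) by (simp add: digit_0 flip: digit_div)
    finally show ?thesis by simp
  qed
  also have "(digit p u n + (\<Sum>i<n. digit p u i * digit p (m + p * c) i)) mod p
      = phi p (Suc n) u ! (m + p * c)"
    using nth_phi[of "Suc n" "m + p * c" p u] assms(1,2) k by simp
  finally show ?thesis .
qed

lemma tau_formula:
  assumes "n \<ge> 2" "p \<ge> 2"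
  shows "tau p (Suc n) u = map (\<lambda>m. (u div p + m * (u mod p) * p ^ (n - 1)) mod p ^ n) [0..<p]"
proof (rule tau_eqI[OF assms])
  let ?v = "map (\<lambda>m. (u div p + m * (u mod p) * p ^ (n - 1)) mod p ^ n) [0..<p]"
  have p0: "p > 0"
    using assms(2) by simp
  show "gamma p (Suc n) (Phi p n ?v) = phi p (Suc n) u"
  proof (rule nth_equalityI)
    show "length (gamma p (Suc n) (Phi p n ?v)) = length (phi p (Suc n) u)"
      by (simp add: gamma_def length_phi)
    fix k
    assume "k < length (gamma p (Suc n) (Phi p n ?v))"
    then have k: "k < p ^ n"
      by (simp add: gamma_def)
    have "k div p < p ^ (n - 1)"
      by (rule div_less_power_pred) (use assms(1) k in simp_all)
    from nth_phi_tau_entry[OF assms(1) p0 _ this, of "k mod p" u]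
    have "phi p n (?v ! (k mod p)) ! (k div p) = phi p (Suc n) u ! k"
      using p0 by simp
    then show "gamma p (Suc n) (Phi p n ?v) ! k = phi p (Suc n) u ! k"
      using nth_gamma_Phi[OF assms(1) p0 _ k, of ?v] by simp
  qed
qed (use assms(2) in auto)

lemma tau_mult_p:
  assumes "n \<ge> 2" "p \<ge> 2"
  shows "tau p (Suc n) (p * x) = replicate p (x mod p ^ n)"
proof -
  have "tau p (Suc n) (p * x)
      = map (\<lambda>m. (p * x div p + m * (p * x mod p) * p ^ (n - 1)) mod p ^ n) [0..<p]"
    by (rule tau_formula[OF assms])
  also have "\<dots> = map (\<lambda>m. x mod p ^ n) [0..<p]"
    using assms(2) by simp
  finally show ?thesis
    by (simp add: map_replicate_const)
qed

lemma tau_one: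
  assumes "n \<ge> 2" "p \<ge> 2"
  shows "tau p (Suc n) 1 = map (\<lambda>m. m * p ^ (n - 1)) [0..<p]"
proof -
  have "m * p ^ (n - 1) < p ^ n" if "m < p" for m
  proof -
    have "m * p ^ (n - 1) < p * p ^ (n - 1)"
      using that by simp
    also have "\<dots> = p ^ n"
      using assms(1) by (cases n) simp_all
    finally show ?thesis .
  qed
  moreover have "tau p (Suc n) 1
      = map (\<lambda>m. (1 div p + m * (1 mod p) * p ^ (n - 1)) mod p ^ n) [0..<p]"
    by (rule tau_formula[OF assms])
  ultimately show ?thesis
    using assms(2) by simp
qed

lemma tau_tilde_map_eq_replicate:
  assumes "\<And>x. x \<in> set xs \<Longrightarrow> tau p r (g x) = replicate p (f x)"
  shows "tau_tilde p r (map g xs) = concat (replicate p (map f xs))"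
proof -
  have "map (\<lambda>k. map (\<lambda>u. tau p r u ! k) (map g xs)) [0..<p] = map (\<lambda>k. map f xs) [0..<p]"
    using assms by (intro map_cong) simp_all
  then show ?thesis
    unfolding tau_tilde_def by (simp add: map_replicate_const)
qed

lemma tau_tilde_map_mult_p:
  assumes "n \<ge> 2" "p \<ge> 2" "\<forall>x\<in>set w. x < p ^ n"
  shows "tau_tilde p (Suc n) (map ((*) p) w) = concat (replicate p w)"
proof -
  have "tau_tilde p (Suc n) (map ((*) p) w) = concat (replicate p (map (\<lambda>x. x mod p ^ n) w))"
    by (rule tau_tilde_map_eq_replicate) (rule tau_mult_p[OF assms(1,2)])
  also have "map (\<lambda>x. x mod p ^ n) w = w"
    using assms(3) by (simp add: map_idI)
  finally show ?thesis .
qed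

lemma tau_tilde_replicate_one:
  assumes "n \<ge> 2" "p \<ge> 2"
  shows "tau_tilde p (Suc n) (replicate L 1)
    = concat (map (\<lambda>m. replicate L (m * p ^ (n - 1))) [0..<p])"
proof -
  have "tau p (Suc n) 1 ! m = m * p ^ (n - 1)" if "m < p" for m
    unfolding tau_one[OF assms] using that by simp
  then have "map (\<lambda>m. replicate L (tau p (Suc n) 1 ! m)) [0..<p]
      = map (\<lambda>m. replicate L (m * p ^ (n - 1))) [0..<p]"
    by (intro map_cong) auto
  then show ?thesis
    by (simp only: tau_tilde_def map_replicate)
qed

lemma vsmult_less: "M > 0 \<Longrightarrow> \<forall>x\<in>set (vsmult M a w). x < M"
  unfolding vsmult_def by simp

lemma vsmult_mult: "vsmult M (a * b) w = vsmult M a (map ((*) b) w)"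
  unfolding vsmult_def by (simp add: mult.assoc)

lemma vsmult_map_mult: "vsmult (c * M) a (map ((*) c) w) = map ((*) c) (vsmult M a w)"
  unfolding vsmult_def by (simp add: mult.left_commute)

lemma vsmult_concat_replicate:
  "vsmult M a (concat (replicate k w)) = concat (replicate k (vsmult M a w))"
  unfolding vsmult_def by (simp add: map_concat)

lemma tau_tilde_vsmult_map_mult_p:
  assumes "n \<ge> 2" "p \<ge> 2"
  shows "tau_tilde p (Suc n) (vsmult (p ^ Suc n) a (map ((*) p) w))
    = vsmult (p ^ n) a (concat (replicate p w))"
proof -
  have "vsmult (p ^ Suc n) a (map ((*) p) w) = map ((*) p) (vsmult (p ^ n) a w)"
    using vsmult_map_mult[of p "p ^ n"] by simp
  moreover have "\<forall>x\<in>set (vsmult (p ^ n) a w). x < p ^ n"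
    using assms(2) by (simp add: vsmult_less)
  ultimately show ?thesis
    by (simp add: tau_tilde_map_mult_p[OF assms] vsmult_concat_replicate)
qed

definition scale_tail :: "nat \<Rightarrow> nat list list \<Rightarrow> nat list list" where
  "scale_tail c A = hd A # map (map ((*) c)) (tl A)"

lemma nth_scale_tail_0: "A \<noteq> [] \<Longrightarrow> scale_tail c A ! 0 = A ! 0"
  unfolding scale_tail_def by (simp add: hd_conv_nth)

lemma nth_scale_tail:
  "0 < k \<Longrightarrow> k < length A \<Longrightarrow> scale_tail c A ! k = map ((*) c) (A ! k)"
  unfolding scale_tail_def by (cases k) (simp_all add: nth_tl)

lemma append_row_Suc_scale_tail:
  assumes "i \<ge> 1" "A \<noteq> []"
  shows "append_row p (Suc r) (Suc i) (scale_tail p A) = scale_tail p (append_row p r i A)"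
proof -
  obtain a as where A: "A = a # as"
    using assms(2) by (cases A) auto
  obtain j where i: "i = Suc j"
    using assms(1) by (cases i) auto
  show ?thesis
    unfolding A i append_row_def scale_tail_def by (simp add: map_concat comp_def mult.left_commute)
qed

lemma append_row_not_Nil: "append_row p r i A \<noteq> []"
  unfolding append_row_def by simp

lemma fold_append_row_Suc_scale_tail:
  assumes "\<forall>i\<in>set ts. i \<ge> 1" "A \<noteq> []"
  shows "fold (append_row p (Suc r)) (map Suc ts) (scale_tail p A)
    = scale_tail p (fold (append_row p r) ts A)"
  using assms
proof (induction ts arbitrary: A)
  case Nil
  then show ?case by simp
next
  case (Cons i ts)
  then show ?case
    by (simp add: append_row_Suc_scale_tail append_row_not_Nil)
qed

lemma length_fold_append_row: "length (fold (append_row p r) ts A) = length A + length ts"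
  by (induction ts arbitrary: A) (simp_all add: append_row_def)

lemma hd_fold_append_row:
  "A \<noteq> [] \<Longrightarrow> set (hd (fold (append_row p r) ts A)) \<subseteq> set (hd A)"
proof (induction ts arbitrary: A)
  case Nil
  then show ?case by simp
next
  case (Cons i ts)
  have "set (hd (append_row p r i A)) \<subseteq> set (hd A)"
    using Cons.prems by (cases A) (auto simp: append_row_def)
  moreover have "set (hd (fold (append_row p r) ts (append_row p r i A)))
      \<subseteq> set (hd (append_row p r i A))"
    by (rule Cons.IH[OF append_row_not_Nil])
  ultimately show ?case
    by simp
qed

lemma nth_append_row:
  "k < length A \<Longrightarrow> append_row p r i A ! k = concat (replicate (p ^ (r - i + 1)) (A ! k))"
  unfolding append_row_def by (simp add: nth_append)

lemma nth_length_append_row: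
  "append_row p r i A ! length A
    = concat (map (\<lambda>j. replicate (length (hd A)) (j * p ^ (i - 1))) [0..<p ^ (r - i + 1)])"
  unfolding append_row_def by (simp add: nth_append)

lemma row_types_ge_1: "i \<in> set (row_types a) \<Longrightarrow> i \<ge> 1"
  unfolding row_types_def by auto

lemma length_row_types:
  assumes "a \<noteq> []"
  shows "length (row_types a) = (hd a - 1) + sum_list (tl a)"
proof -
  have "map (\<lambda>i. a ! (i - 1)) [2..<length a + 1] = tl a"
    by (rule nth_equalityI) (auto simp: nth_tl simp del: upt_Suc)
  then have "sum_list (map (\<lambda>i. a ! (i - 1)) [2..<length a + 1]) = sum_list (tl a)"
    by simp
  then show ?thesis
    using assms unfolding row_types_def by (simp add: length_concat comp_def hd_conv_nth)
qed

lemma row_types_snoc_Suc: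
  assumes "a \<noteq> []"
  shows "row_types (a @ [Suc k]) = row_types (a @ [k]) @ [Suc (length a)]"
proof -
  have upt: "[2..<length (a @ [x]) + 1] = [2..<Suc (length a)] @ [Suc (length a)]" for x :: nat
    using assms by (cases a) (simp_all add: upt_Suc_append del: upt_Suc)
  have "row_types (a @ [x]) = replicate (hd a - 1) 1
      @ concat (map (\<lambda>i. replicate (a ! (i - 1)) i) [2..<Suc (length a)])
      @ replicate x (Suc (length a))" for x
  proof -
    have init: "map (\<lambda>i. replicate ((a @ [x]) ! (i - 1)) i) [2..<Suc (length a)]
        = map (\<lambda>i. replicate (a ! (i - 1)) i) [2..<Suc (length a)]"
      by (intro map_cong) (auto simp: nth_append)
    show ?thesis
      using assms unfolding row_types_def upt map_append init
      by (simp add: nth_append hd_conv_nth del: upt_Suc)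
  qed
  then show ?thesis
    by (simp add: replicate_append_same)
qed

lemma row_types_Cons_1:
  assumes "a \<noteq> []"
  shows "row_types (1 # a) = map Suc (row_types (Suc (hd a) # tl a))"
proof -
  obtain x xs where a: "a = x # xs"
    using assms by (cases a) auto
  let ?I = "[2..<Suc (Suc (length xs))]"
  have upt: "[2..<length (1 # a) + 1] = 2 # map Suc ?I"
    unfolding a by (simp add: upt_conv_Cons map_Suc_upt del: upt_Suc)
  have shift: "map (\<lambda>i. replicate ((1 # x # xs) ! i) (Suc i)) ?I
      = map (\<lambda>i. map Suc (replicate ((Suc x # xs) ! (i - 1)) i)) ?I"
  proof (rule map_cong)
    fix i
    assume "i \<in> set ?I"
    then obtain j where "i = Suc (Suc j)"
      using le_Suc_ex[of 2 i] by auto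
    then show "replicate ((1 # x # xs) ! i) (Suc i)
        = map Suc (replicate ((Suc x # xs) ! (i - 1)) i)"
      by simp
  qed simp
  have "row_types (1 # a)
      = replicate x 2 @ concat (map (\<lambda>i. replicate ((1 # x # xs) ! i) (Suc i)) ?I)"
    unfolding row_types_def upt by (simp add: a comp_def del: upt_Suc)
  also have "\<dots> = map Suc (row_types (Suc (hd a) # tl a))"
    unfolding shift by (simp add: a row_types_def map_concat comp_def del: upt_Suc)
  finally show ?thesis .
qed

lemma Amat_snoc_Suc:
  assumes "a \<noteq> []"
  shows "Amat p r (a @ [Suc k]) = append_row p r (Suc (length a)) (Amat p r (a @ [k]))"
  using assms by (simp add: Amat_def row_types_snoc_Suc)

lemma Amat_Cons_1:
  assumes "a \<noteq> []"
  shows "Amat p (Suc r) (1 # a) = scale_tail p (Amat p r (Suc (hd a) # tl a))"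
proof -
  have "scale_tail p [[1]] = [[1]]"
    by (simp add: scale_tail_def)
  then show ?thesis
    unfolding Amat_def row_types_Cons_1[OF assms]
    by (metis fold_append_row_Suc_scale_tail row_types_ge_1 list.discI)
qed

lemma length_Amat:
  assumes "a \<noteq> []" "hd a \<ge> 1"
  shows "length (Amat p r a) = sum_list a"
proof -
  have "sum_list a = hd a + sum_list (tl a)"
    using assms(1) by (cases a) simp_all
  then show ?thesis
    using assms by (simp add: Amat_def length_fold_append_row length_row_types)
qed

lemma Amat_not_Nil: "Amat p r a \<noteq> []"
  by (simp add: Amat_def flip: length_0_conv add: length_fold_append_row)

lemma Amat_nth_0: "Amat p r a ! 0 = replicate (length (Amat p r a ! 0)) 1"
proof -
  have "Amat p r a \<noteq> []"
    by (rule Amat_not_Nil)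
  moreover have "set (hd (Amat p r a)) \<subseteq> {1}"
    using hd_fold_append_row[of "[[1]]"] by (simp add: Amat_def)
  ultimately show ?thesis
    by (auto simp: hd_conv_nth intro: replicate_length_same[symmetric])
qed

lemma Amat_eq_append_row_last:
  assumes "length t \<ge> 2" "last t \<ge> 1"
  shows "Amat p r t = append_row p r (length t) (Amat p r (butlast t @ [last t - 1]))"
proof -
  have "butlast t \<noteq> []" "t \<noteq> []"
    using assms(1) by (auto simp flip: length_greater_0_conv)
  moreover have "t = butlast t @ [Suc (last t - 1)]"
    using assms(2) calculation(2) by simp
  ultimately show ?thesis
    by (metis Amat_snoc_Suc length_append_singleton)
qed

lemma Amat_raise_row_types:
  assumes "length t \<ge> 2" "t ! 0 \<ge> 1"
  shows "Amat p (Suc r) ([1, t ! 0 - 1] @ take (length t - 2) (drop 1 t) @ [t ! (length t - 1) - 1])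
    = scale_tail p (Amat p r (butlast t @ [last t - 1]))"
proof -
  obtain x xs where t: "t = x # xs"
    using assms(1) by (cases t) auto
  have "butlast t = x # take (length t - 2) (drop 1 t)" "last t = t ! (length t - 1)"
    using assms(1) unfolding t by (auto simp: butlast_conv_take last_conv_nth take_Cons')
  then show ?thesis
    using Amat_Cons_1[of "(x - 1) # take (length t - 2) (drop 1 t) @ [last t - 1]" p r] assms(2)
    unfolding t by simp
qed

lemma length_Amat_butlast:
  assumes "length t \<ge> 2" "hd t \<ge> 1" "last t \<ge> 1"
  shows "length (Amat p r (butlast t @ [last t - 1])) = sum_list t - 1"
proof -
  obtain x xs where t: "t = x # xs" "xs \<noteq> []"
    using assms(1) by (cases t) (auto simp flip: length_greater_0_conv)
  have "sum_list t = sum_list (butlast t) + last t"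
    by (metis append_butlast_last_id[of t] t(1) list.discI sum_list_append sum_list.Cons
        sum_list.Nil add_0_right)
  then show ?thesis
    using length_Amat[of "butlast t @ [last t - 1]" p r] assms(2,3) t by simp
qed

theorem proposition2:
  fixes p s :: nat and t :: "nat list"
  assumes "prime p" and "s \<ge> 2" and "length t = s"
    and "t ! 0 \<ge> 1" and "t ! (s - 1) \<ge> 1"
  defines "N \<equiv> sum_list t"
    and "W \<equiv> Amat p s t"
    and "V \<equiv> Amat p (Suc s) ([1, t ! 0 - 1] @ take (s - 2) (drop 1 t) @ [t ! (s - 1) - 1])"
  shows "(\<forall>i\<in>{2..N - 1}. \<forall>\<sigma>. vec_ord (p ^ s) (W ! (i - 1)) = p ^ \<sigma> \<longrightarrow>
            (\<forall>q<\<sigma>. tau_tilde p (Suc s) (vsmult (p ^ Suc s) (p ^ q) (V ! (i - 1)))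
                    = vsmult (p ^ s) (p ^ q) (W ! (i - 1))))
       \<and> (\<forall>j<s. tau_tilde p (Suc s) (vsmult (p ^ Suc s) (p ^ (j + 1)) (V ! 0))
                  = vsmult (p ^ s) (p ^ j) (W ! 0))
       \<and> tau_tilde p (Suc s) (V ! 0) = W ! (N - 1)"
proof -
  have p: "p \<ge> 2"
    using assms(1) by (simp add: prime_ge_2_nat)
  have last: "last t = t ! (s - 1)" and hd: "hd t = t ! 0"
    using assms(2,3) by (auto simp: last_conv_nth hd_conv_nth simp flip: length_greater_0_conv)
  define A where "A = Amat p s (butlast t @ [last t - 1])"
  have W: "W = append_row p s s A"
    unfolding W_def A_def using Amat_eq_append_row_last[of t p s] assms(2,3,5) last by simp
  have V: "V = scale_tail p A"
    unfolding V_def A_def using Amat_raise_row_types[of t p s] assms(2-4) by simp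
  have len: "length A = N - 1"
    unfolding A_def N_def using length_Amat_butlast[of t p s] assms(2-5) last hd by simp
  have A0: "A \<noteq> []" "A ! 0 = replicate (length (hd A)) 1"
    unfolding A_def using Amat_not_Nil Amat_nth_0 by (auto simp: hd_conv_nth)
  have rows: "tau_tilde p (Suc s) (vsmult (p ^ Suc s) a (map ((*) p) (A ! i)))
      = vsmult (p ^ s) a (W ! i)"
    if "i < length A" for i a
    unfolding W nth_append_row[OF that] tau_tilde_vsmult_map_mult_p[OF assms(2) p] by simp
  have "tau_tilde p (Suc s) (vsmult (p ^ Suc s) a (V ! (i - 1))) = vsmult (p ^ s) a (W ! (i - 1))"
    if "i \<in> {2..N - 1}" for i a
    using that len rows[of "i - 1" a] nth_scale_tail[of "i - 1" A p] by (auto simp: V)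
  moreover have "tau_tilde p (Suc s) (vsmult (p ^ Suc s) (p ^ (j + 1)) (V ! 0))
      = vsmult (p ^ s) (p ^ j) (W ! 0)" for j
    using rows[of 0 "p ^ j"] vsmult_mult[of "p ^ Suc s" "p ^ j" p] A0(1)
    by (simp add: V nth_scale_tail_0 mult.commute)
  moreover have "tau_tilde p (Suc s) (V ! 0) = W ! (N - 1)"
    using tau_tilde_replicate_one[OF assms(2) p] nth_length_append_row[of p s s A] len A0
    by (simp add: V W nth_scale_tail_0)
  ultimately show ?thesis
    by blast
qed

end
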